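(* Let $\mathbf d=(d_1,d_2)\in\mathbb{N}^2\setminus\{(0,0)\}$ and let $Q_{\mathbf d}$ be the set of quads of bi-degree exactly $\mathbf d$. Then $Q_{\mathbf d}$ is finite and nonempty and its elements have pairwise distinct sizes. Listing its elements in order of decreasing size, the sizes form a sequence of consecutive integers, and the points of $\mathbb{Z}[\gamma]$ they represent form a strictly decreasing sequence of positive real numbers. The element of largest size has size $d_1+d_2$ and represents $d_1+d_2\gamma^{-1}$; the element of smallest size represents $|d_1-d_2\gamma^{-1}|$. Every element of $Q_{\mathbf d}$ other than these two represents a point $m+n\gamma^{-1}$ ($m,n\in\mathbb{Z}$) with $|m|\le d_1$ and $|n|\le d_2-1$.
   Context: Let $f\colon\mathbb{Z}\to\mathbb{Z}$ be defined by $f(0)=f(1)=1$, $f(i+2)=f(i+1)+f(i)$ for all $i\in\mathbb{Z}$; $\gamma=(1+\sqrt5)/2$; $\mathbb{Z}[\gamma]=\mathbb{Z}\oplus\mathbb{Z}\gamma^{-1}$. A quad is a tuple $q=(i;a,b,c)$ of non-negative integers with $a\ge1$. It represents $\alpha\in\mathbb{Z}[\gamma]$ if $\alpha=a\gamma^{-i}+b\gamma^{-i-1}+c\gamma^{-i-2}$. Its bi-degree is $(d_1(q),d_2(q))$ with $d_1(q)=af(i-2)+bf(i-1)+cf(i)$ and $d_2(q)=af(i-1)+bf(i)+cf(i+1)$, and its size is $a+b+c$. *)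

theory Defs
  imports Complex_Main "HOL-Number_Theory.Fib"
begin

text \<open>The two-sided Fibonacci function f : Z -> Z with f(0)=f(1)=1 and
 f(i+2)=f(i+1)+f(i) for all integers i; explicitly f(i) = F(i+1) where F is the
 usual (negafibonacci-extended) Fibonacci sequence.\<close>
definition fz :: "int \<Rightarrow> int" where
  "fz i = (if i \<ge> -1 then int (fib (nat (i + 1)))
           else (-1) ^ (nat (-(i + 1)) + 1) * int (fib (nat (-(i + 1)))))"

lemma fz_0: "fz 0 = 1" by (simp add: fz_def)
lemma fz_1: "fz 1 = 1" by (simp add: fz_def numeral_2_eq_2)

definition gam :: real where "gam = (1 + sqrt 5) / 2"

type_synonym quad = "nat \<times> nat \<times> nat \<times> nat"

definition is_quad :: "quad \<Rightarrow> bool" where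
  "is_quad q = (case q of (i, a, b, c) \<Rightarrow> a \<ge> 1)"

definition qval :: "quad \<Rightarrow> real" where
  "qval q = (case q of (i, a, b, c) \<Rightarrow>
     real a * gam powi (- int i) + real b * gam powi (- int i - 1)
     + real c * gam powi (- int i - 2))"

definition qd1 :: "quad \<Rightarrow> int" where
  "qd1 q = (case q of (i, a, b, c) \<Rightarrow>
     int a * fz (int i - 2) + int b * fz (int i - 1) + int c * fz (int i))"

definition qd2 :: "quad \<Rightarrow> int" where
  "qd2 q = (case q of (i, a, b, c) \<Rightarrow>
     int a * fz (int i - 1) + int b * fz (int i) + int c * fz (int i + 1))"

definition qsize :: "quad \<Rightarrow> nat" where
  "qsize q = (case q of (i, a, b, c) \<Rightarrow> a + b + c)"

definition Qd :: "nat \<Rightarrow> nat \<Rightarrow> quad set" where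
  "Qd d1 d2 = {q. is_quad q \<and> qd1 q = int d1 \<and> qd2 q = int d2}"

end

theory Submission
  imports Defs
begin

(* With F n = fz (n - 2) the bi-degree of (i; a, b, c) is
   (u F i + v F (i+1), u F (i+1) + v F (i+2)) for u = a + c, v = b + c; by
   unimodularity (u, v) is the i-th point of the orbit of d under the inverse
   Fibonacci step (u, v) -> (v - u, u), so the quads of bi-degree d are the
   (i; u_i - c, v_i - c, c) with u_i \<ge> c + 1, v_i \<ge> c.  With tau = 1/gamma such a
   quad has size u_i + v_i - c and value tau^i (u_i + v_i tau) - 2 c tau^(i+1).
   Both potentials u_k + v_k and tau^k (u_k + v_k tau) decrease while u_k \<ge> 0, and an
   orbit that leaves the cone never carries a quad again; hence size and value
   decrease strictly along the lexicographic order of the keys (i, c), giving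
   finiteness, injectivity of the size and monotonicity of the value.  Local moves
   lower the size by one unless b = 0, which characterises the last quad: this
   gives the interval of sizes and the value |d1 - d2 tau| of the smallest quad.
   Finally tau^k = (-1)^k (F k - F (k+1) tau) yields the integer coordinates. *)

definition F :: "nat \<Rightarrow> int" where "F n = fz (int n - 2)"

lemma F_0 [simp]: "F 0 = 1" and F_1 [simp]: "F (Suc 0) = 0"
  by (simp_all add: F_def fz_def)

lemma F_Suc: "F (Suc n) = int (fib n)"
  by (simp add: F_def fz_def)

lemma F_rec: "F (Suc (Suc n)) = F (Suc n) + F n"
  by (cases n) (simp_all add: F_Suc)

lemma F_nonneg: "F n \<ge> 0"
  by (cases n) (simp_all add: F_Suc)

lemma F_pos:
  assumes "n \<ge> 2" shows "F n \<ge> 1"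
proof -
  obtain m where "n = Suc (Suc m)" using assms by (metis add_2_eq_Suc le_Suc_ex)
  then show ?thesis by (simp add: F_Suc fib_neq_0_nat Suc_le_eq)
qed

lemma qd_F:
  "qd1 (i, a, b, c) = int a * F i + int b * F (Suc i) + int c * F (Suc (Suc i))"
  "qd2 (i, a, b, c) = int a * F (Suc i) + int b * F (Suc (Suc i)) + int c * F (Suc (Suc (Suc i)))"
proof -
  have "int (Suc (Suc (Suc i))) - 2 = int i + 1" by simp
  then have "fz (int i + 1) = F (Suc (Suc (Suc i)))" by (simp only: F_def)
  then show "qd1 (i, a, b, c) = int a * F i + int b * F (Suc i) + int c * F (Suc (Suc i))"
    and "qd2 (i, a, b, c) = int a * F (Suc i) + int b * F (Suc (Suc i)) + int c * F (Suc (Suc (Suc i)))"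
    by (simp_all add: qd1_def qd2_def F_def)
qed

section \<open>The backward Fibonacci orbit of a bi-degree\<close>

fun orbit :: "int \<Rightarrow> int \<Rightarrow> nat \<Rightarrow> int \<times> int" where
  "orbit x y 0 = (x, y)"
| "orbit x y (Suc i) = (snd (orbit x y i) - fst (orbit x y i), fst (orbit x y i))"

definition U :: "int \<Rightarrow> int \<Rightarrow> nat \<Rightarrow> int" where "U x y i = fst (orbit x y i)"
definition V :: "int \<Rightarrow> int \<Rightarrow> nat \<Rightarrow> int" where "V x y i = snd (orbit x y i)"

lemma U_0 [simp]: "U x y 0 = x" and V_0 [simp]: "V x y 0 = y"
  and U_Suc [simp]: "U x y (Suc i) = V x y i - U x y i"
  and V_Suc [simp]: "V x y (Suc i) = U x y i"
  by (simp_all add: U_def V_def)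

lemma orbit_returns:
  "U x y i * F i + V x y i * F (Suc i) = x \<and> U x y i * F (Suc i) + V x y i * F (Suc (Suc i)) = y"
  by (induction i) (simp_all add: F_rec algebra_simps)

lemma orbit_unique:
  assumes "u * F i + v * F (Suc i) = x" and "u * F (Suc i) + v * F (Suc (Suc i)) = y"
  shows "u = U x y i \<and> v = V x y i"
  using assms
proof (induction i arbitrary: u v)
  case 0 then show ?case by (simp add: F_Suc)
next
  case (Suc i)
  have "v * F i + (u + v) * F (Suc i) = x"
    and "v * F (Suc i) + (u + v) * F (Suc (Suc i)) = y"
    using Suc.prems by (simp_all add: F_rec algebra_simps)
  then have "v = U x y i \<and> u + v = V x y i" using Suc.IH by blast
  then show ?case by simp
qed

lemma Qd_iff:
  "(i, a, b, c) \<in> Qd d1 d2 \<longleftrightarrow>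
     a \<ge> 1 \<and> int a + int c = U d1 d2 i \<and> int b + int c = V d1 d2 i"
proof -
  have "qd1 (i, a, b, c) = (int a + int c) * F i + (int b + int c) * F (Suc i)"
    and "qd2 (i, a, b, c) = (int a + int c) * F (Suc i) + (int b + int c) * F (Suc (Suc i))"
    by (simp_all add: qd_F F_rec algebra_simps)
  then show ?thesis
    unfolding Qd_def is_quad_def mem_Collect_eq prod.case
    using orbit_returns[of d1 d2 i] orbit_unique[of "int a + int c" i "int b + int c" d1 d2]
    by metis
qed

definition tau :: real where "tau = gam powi (-1)"

lemma gam_pos: "gam > 0"
  by (simp add: gam_def add_pos_nonneg)

lemma gam_sq: "gam * gam = gam + 1"
proof -
  have "sqrt 5 * sqrt 5 = 5" by simp
  then show ?thesis unfolding gam_def by (simp add: field_simps)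
qed

lemma tau_pos: "tau > 0"
  using gam_pos by (simp add: tau_def)

lemma tau_sq: "tau * tau = 1 - tau"
  using gam_sq gam_pos by (simp add: tau_def field_simps)

lemma gam_powi_neg: "gam powi (- int i) = tau ^ i"
  by (simp add: tau_def power_int_minus power_inverse)

lemma qval_tau: "qval (i, a, b, c) = real a * tau ^ i + real b * tau ^ Suc i + real c * tau ^ Suc (Suc i)"
proof -
  have "- int i - 1 = - int (Suc i)" "- int i - 2 = - int (Suc (Suc i))" by simp_all
  then show ?thesis by (simp only: qval_def prod.case gam_powi_neg)
qed

lemma Qd_value_pos:
  assumes "q \<in> Qd d1 d2" shows "qval q > 0"
proof -
  obtain i a b c where qq: "q = (i, a, b, c)" by (cases q) auto
  have "a \<ge> 1" using assms unfolding qq by (simp add: Qd_iff)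
  then show ?thesis unfolding qq qval_tau using tau_pos by (simp add: add_pos_nonneg)
qed

definition orbit_size :: "int \<Rightarrow> int \<Rightarrow> nat \<Rightarrow> int" where
  "orbit_size x y k = U x y k + V x y k"

definition orbit_value :: "int \<Rightarrow> int \<Rightarrow> nat \<Rightarrow> real" where
  "orbit_value x y k = tau ^ k * (of_int (U x y k) + of_int (V x y k) * tau)"

lemma orbit_size_Suc: "orbit_size x y (Suc k) = V x y k"
  by (simp add: orbit_size_def)

lemma orbit_value_Suc: "orbit_value x y (Suc k) = orbit_value x y k - 2 * of_int (U x y k) * tau ^ Suc k"
proof -
  have "orbit_value x y (Suc k)
      = tau ^ k * (tau * of_int (V x y k) - tau * of_int (U x y k) + of_int (U x y k) * (tau * tau))"
    by (simp add: orbit_value_def algebra_simps)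
  then show ?thesis unfolding tau_sq by (simp add: orbit_value_def algebra_simps)
qed

lemma qsize_orbit:
  assumes "(i, a, b, c) \<in> Qd d1 d2"
  shows "int (qsize (i, a, b, c)) = orbit_size d1 d2 i - int c"
  using assms by (auto simp: Qd_iff qsize_def orbit_size_def)

lemma qval_orbit:
  assumes "(i, a, b, c) \<in> Qd d1 d2"
  shows "qval (i, a, b, c) = orbit_value d1 d2 i - 2 * real c * tau ^ Suc i"
proof -
  have "U d1 d2 i = int a + int c" "V d1 d2 i = int b + int c"
    using assms by (auto simp: Qd_iff)
  moreover have "qval (i, a, b, c) = tau ^ i * (real a + real b * tau + real c * (tau * tau))"
    by (simp add: qval_tau algebra_simps)
  ultimately show ?thesis unfolding tau_sq orbit_value_def by (simp add: algebra_simps)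
qed

section \<open>Leaving the cone\<close>

text \<open>Orbit points with one negative coordinate of this shape are mapped to points of
  the same shape, so once the orbit has escaped it never carries a quad again
  (quads need u \<ge> 1 and v \<ge> 0).\<close>

definition escaped :: "int \<Rightarrow> int \<Rightarrow> nat \<Rightarrow> bool" where
  "escaped x y i \<longleftrightarrow> (U x y i < 0 \<and> V x y i \<ge> 0) \<or> (V x y i < 0 \<and> U x y i > 0)"

lemma escaped_mono:
  assumes "escaped x y i" and "i \<le> j"
  shows "escaped x y j"
  using assms(2,1) by (induction j rule: dec_induct) (auto simp: escaped_def)

lemma escaped_no_quad: "escaped x y j \<Longrightarrow> U x y j \<ge> 1 \<Longrightarrow> V x y j \<ge> 0 \<Longrightarrow> False"
  unfolding escaped_def by auto

text \<open>Between an orbit index with u \<ge> 0 and a later index carrying a quad, u stays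
  non-negative: a first sign change of u would make the orbit escape.\<close>

lemma U_nonneg_before_quad:
  assumes start: "U x y i \<ge> 0" and quad: "U x y j \<ge> 1" "V x y j \<ge> 0"
    and "i \<le> k" "k \<le> j"
  shows "U x y k \<ge> 0"
  using assms(4,5)
proof (induction k rule: dec_induct)
  case base then show ?case using start by simp
next
  case (step k)
  show ?case
  proof (rule ccontr)
    assume "\<not> U x y (Suc k) \<ge> 0"
    then have "escaped x y (Suc k)" using step by (simp add: escaped_def)
    then have "escaped x y j" using step.prems escaped_mono by blast
    then show False using quad escaped_no_quad by blast
  qed
qed

lemma orbit_potentials_decrease:
  assumes "i \<le> j" and start: "U x y i \<ge> 0" and quad: "U x y j \<ge> 1" "V x y j \<ge> 0"
  shows "orbit_size x y j \<le> orbit_size x y i \<and> orbit_value x y j \<le> orbit_value x y i"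
proof -
  have "orbit_size x y k \<le> orbit_size x y i \<and> orbit_value x y k \<le> orbit_value x y i"
    if "i \<le> k" "k \<le> j" for k
    using that
  proof (induction k rule: dec_induct)
    case base then show ?case by simp
  next
    case (step k)
    have "U x y k \<ge> 0"
      using U_nonneg_before_quad[OF start quad] step by simp
    then have "orbit_size x y (Suc k) \<le> orbit_size x y k \<and> orbit_value x y (Suc k) \<le> orbit_value x y k"
      using tau_pos by (simp add: orbit_size_Suc orbit_size_def orbit_value_Suc)
    then show ?case using step by force
  qed
  then show ?thesis using assms(1) by simp
qed

section \<open>Size and value decrease lexicographically\<close>

lemma Qd_lex_decreasing:
  assumes q: "(i, a, b, c) \<in> Qd d1 d2" and q': "(j, a', b', c') \<in> Qd d1 d2"
    and lex: "i < j \<or> (i = j \<and> c < c')"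
  shows "qsize (j, a', b', c') < qsize (i, a, b, c) \<and> qval (j, a', b', c') < qval (i, a, b, c)"
proof -
  let ?S = "orbit_size d1 d2" and ?A = "orbit_value d1 d2"
  have ui: "U d1 d2 i = int a + int c" "V d1 d2 i = int b + int c" "a \<ge> 1"
    using q by (auto simp: Qd_iff)
  have uj: "U d1 d2 j = int a' + int c'" "V d1 d2 j = int b' + int c'" "a' \<ge> 1"
    using q' by (auto simp: Qd_iff)
  have "?S j - int c' < ?S i - int c \<and> ?A j - 2 * real c' * tau ^ Suc j < ?A i - 2 * real c * tau ^ Suc i"
    using lex
  proof
    assume ij: "i < j"
    have "U d1 d2 (Suc i) \<ge> 0"
      using U_nonneg_before_quad[of d1 d2 i j "Suc i"] ui uj ij by simp
    then have pot: "?S j \<le> ?S (Suc i) \<and> ?A j \<le> ?A (Suc i)"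
      using orbit_potentials_decrease[of "Suc i" j d1 d2] uj ij by simp
    have "?S j - int c' \<le> V d1 d2 i" using pot orbit_size_Suc by simp
    also have "\<dots> < ?S i - int c" using ui by (simp add: orbit_size_def)
    finally have size: "?S j - int c' < ?S i - int c" .
    have "2 * real c' * tau ^ Suc j \<ge> 0" using tau_pos by simp
    then have "?A j - 2 * real c' * tau ^ Suc j \<le> ?A (Suc i)" using pot by linarith
    also have "\<dots> = ?A i - 2 * of_int (U d1 d2 i) * tau ^ Suc i" by (rule orbit_value_Suc)
    also have "\<dots> < ?A i - 2 * real c * tau ^ Suc i" using ui tau_pos by simp
    finally show ?thesis using size by simp
  next
    assume "i = j \<and> c < c'"
    then show ?thesis using tau_pos by simp
  qed
  then show ?thesis using qsize_orbit[OF q] qsize_orbit[OF q'] qval_orbit[OF q] qval_orbit[OF q']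
    by simp
qed

text \<open>Hence any two distinct quads of the same bi-degree are strictly ordered by size
  and value in the same direction (a quad is determined by i, c and the bi-degree).\<close>

lemma Qd_comparable:
  assumes q: "q \<in> Qd d1 d2" and q': "q' \<in> Qd d1 d2" and "q \<noteq> q'"
  shows "(qsize q < qsize q' \<and> qval q < qval q') \<or> (qsize q' < qsize q \<and> qval q' < qval q)"
proof -
  obtain i a b c j a' b' c' where qq: "q = (i, a, b, c)" "q' = (j, a', b', c')"
    by (cases q, cases q') auto
  have "\<not> (i = j \<and> c = c')"
    using q q' \<open>q \<noteq> q'\<close> unfolding qq by (auto simp: Qd_iff)
  then have "(i < j \<or> (i = j \<and> c < c')) \<or> (j < i \<or> (j = i \<and> c' < c))" by auto
  then show ?thesis
    using Qd_lex_decreasing[of i a b c d1 d2 j a' b' c'] Qd_lex_decreasing[of j a' b' c' d1 d2 i a b c]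
      q q' unfolding qq by blast
qed

lemma Qd_size_inj: "inj_on qsize (Qd d1 d2)"
  by (rule inj_onI) (use Qd_comparable in fastforce)

lemma Qd_value_mono:
  "q \<in> Qd d1 d2 \<Longrightarrow> q' \<in> Qd d1 d2 \<Longrightarrow> qsize q < qsize q' \<Longrightarrow> qval q < qval q'"
  using Qd_comparable[of q d1 d2 q'] by fastforce

text \<open>The size of a quad is at most d1 + d2, the size potential at the start of the orbit;
  together with injectivity of the size this gives finiteness.\<close>

lemma Qd_size_le: "q \<in> Qd d1 d2 \<Longrightarrow> qsize q \<le> d1 + d2"
proof -
  assume q: "q \<in> Qd d1 d2"
  obtain i a b c where qq: "q = (i, a, b, c)" by (cases q) auto
  have "U d1 d2 i \<ge> 1" "V d1 d2 i \<ge> 0" using q unfolding qq by (auto simp: Qd_iff)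
  then have "orbit_size d1 d2 i \<le> orbit_size d1 d2 0"
    using orbit_potentials_decrease[of 0 i d1 d2] by simp
  then show ?thesis using qsize_orbit[of i a b c d1 d2] q unfolding qq by (simp add: orbit_size_def)
qed

lemma Qd_finite: "finite (Qd d1 d2)"
proof (rule finite_imageD[OF _ Qd_size_inj])
  show "finite (qsize ` Qd d1 d2)"
    by (rule finite_subset[of _ "{..d1 + d2}"]) (auto dest: Qd_size_le)
qed

section \<open>The largest and the smallest quad\<close>

definition top_quad :: "nat \<Rightarrow> nat \<Rightarrow> quad" where
  "top_quad d1 d2 = (if d1 \<ge> 1 then (0, d1, d2, 0) else (1, d2, 0, 0))"

lemma top_quad:
  assumes "(d1, d2) \<noteq> (0, 0)"
  shows "top_quad d1 d2 \<in> Qd d1 d2" and "qsize (top_quad d1 d2) = d1 + d2"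
    and "qval (top_quad d1 d2) = real d1 + real d2 * tau"
  using assms by (auto simp: top_quad_def Qd_iff qsize_def qval_tau)

lemma Qd_size_step_down:
  assumes q: "(i, a, b, c) \<in> Qd d1 d2" and b: "b \<ge> 1"
  shows "\<exists>q' \<in> Qd d1 d2. qsize q' + 1 = qsize (i, a, b, c)"
proof -
  have ui: "U d1 d2 i = int a + int c" "V d1 d2 i = int b + int c" "a \<ge> 1"
    using q by (auto simp: Qd_iff)
  consider "a \<ge> 2" | "a = 1" "b \<ge> 2" | "a = 1" "b = 1" using ui(3) b by linarith
  then show ?thesis
  proof cases
    case 1
    then have "(i, a - 1, b - 1, c + 1) \<in> Qd d1 d2" using ui b by (simp add: Qd_iff)
    then show ?thesis using 1 b by (intro bexI) (auto simp: qsize_def)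
  next
    case 2
    then have "(Suc i, b - 1, c + 1, 0) \<in> Qd d1 d2" using ui by (simp add: Qd_iff)
    then show ?thesis using 2 by (intro bexI) (auto simp: qsize_def)
  next
    case 3
    then have "(Suc (Suc i), c + 1, 0, 0) \<in> Qd d1 d2" using ui by (simp add: Qd_iff)
    then show ?thesis using 3 by (intro bexI) (auto simp: qsize_def)
  qed
qed

text \<open>A quad with b = 0 has the lexicographically last key: beyond its index the
  orbit has already left the cone, and at its index c is maximal.\<close>

lemma Qd_b0_last:
  assumes q: "(i, a, 0, c) \<in> Qd d1 d2" and q': "(j, a', b', c') \<in> Qd d1 d2"
  shows "j < i \<or> (j = i \<and> c' \<le> c)"
proof -
  have ui: "U d1 d2 i = int a + int c" "V d1 d2 i = int c" "a \<ge> 1"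
    using q by (auto simp: Qd_iff)
  have uj: "U d1 d2 j = int a' + int c'" "V d1 d2 j = int b' + int c'" "a' \<ge> 1"
    using q' by (auto simp: Qd_iff)
  have "\<not> i < j"
  proof
    assume "i < j"
    then have "U d1 d2 (Suc i) \<ge> 0"
      using U_nonneg_before_quad[of d1 d2 i j "Suc i"] ui uj by simp
    then show False using ui by simp
  qed
  moreover have "j = i \<Longrightarrow> c' \<le> c" using ui uj by simp
  ultimately show ?thesis by linarith
qed

lemma Qd_b0_min_size:
  assumes q: "(i, a, 0, c) \<in> Qd d1 d2" and q': "q' \<in> Qd d1 d2"
  shows "qsize (i, a, 0, c) \<le> qsize q'"
proof -
  obtain j a' b' c' where qq: "q' = (j, a', b', c')" by (cases q') auto
  have "j < i \<or> (j = i \<and> c' < c) \<or> (j = i \<and> c' = c)"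
    using Qd_b0_last[OF q] q' unfolding qq by fastforce
  then show ?thesis
    using Qd_lex_decreasing[of j a' b' c' d1 d2 i a 0 c] q q' qsize_orbit[OF q]
      qsize_orbit[of i a' b' c d1 d2] unfolding qq by (auto simp: less_imp_le)
qed

lemma orbit_conjugate:
  "tau ^ i * (of_int (U x y i) - of_int (V x y i) * tau) = (-1) ^ i * (of_int x - of_int y * tau)"
proof (induction i)
  case 0 then show ?case by simp
next
  case (Suc i)
  have "tau ^ Suc i * (of_int (U x y (Suc i)) - of_int (V x y (Suc i)) * tau)
      = tau ^ i * (tau * of_int (V x y i) - of_int (U x y i) * (tau + tau * tau))"
    by (simp add: algebra_simps)
  also have "\<dots> = - (tau ^ i * (of_int (U x y i) - of_int (V x y i) * tau))"
    unfolding tau_sq by (simp add: algebra_simps)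
  finally show ?case using Suc by simp
qed

lemma Qd_b0_value:
  assumes q: "(i, a, 0, c) \<in> Qd d1 d2"
  shows "qval (i, a, 0, c) = \<bar>real d1 - real d2 * tau\<bar>"
proof -
  have v: "V d1 d2 i = int c" using q by (simp add: Qd_iff)
  have "qval (i, a, 0, c) = tau ^ i * (of_int (U d1 d2 i) - of_int (V d1 d2 i) * tau)"
    unfolding qval_orbit[OF q] orbit_value_def v by (simp add: algebra_simps)
  also have "\<dots> = (-1) ^ i * (real d1 - real d2 * tau)" by (simp add: orbit_conjugate)
  finally have e: "qval (i, a, 0, c) = (-1) ^ i * (real d1 - real d2 * tau)" .
  have "qval (i, a, 0, c) > 0" using q by (rule Qd_value_pos)
  then have "qval (i, a, 0, c) = \<bar>(-1) ^ i * (real d1 - real d2 * tau)\<bar>" using e by simp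
  then show ?thesis by (simp add: abs_mult power_abs)
qed

text \<open>A quad of least size has b = 0 (otherwise a local move lowers its size),
  so its value is |d1 - d2 tau|.\<close>

lemma Qd_least_size_value:
  assumes q: "q \<in> Qd d1 d2" and least: "\<And>q'. q' \<in> Qd d1 d2 \<Longrightarrow> qsize q \<le> qsize q'"
  shows "qval q = \<bar>real d1 - real d2 * tau\<bar>"
proof -
  obtain i a b c where qq: "q = (i, a, b, c)" by (cases q) auto
  have "b = 0"
  proof (rule ccontr)
    assume "b \<noteq> 0"
    then obtain q' where "q' \<in> Qd d1 d2" "qsize q' + 1 = qsize q"
      using Qd_size_step_down[of i a b c d1 d2] q unfolding qq by auto
    then show False using least[of q'] by simp
  qed
  then show ?thesis using Qd_b0_value q unfolding qq by simp
qed

section \<open>The sizes form an interval\<close>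

lemma interval_by_unit_steps:
  fixes S :: "nat set"
  assumes top: "M \<in> S" and step: "\<And>s. s \<in> S \<Longrightarrow> m < s \<Longrightarrow> s - 1 \<in> S"
  shows "{m..M} \<subseteq> S"
proof
  have down: "M - k \<in> S" if "k \<le> M - m" for k
    using that
  proof (induction k)
    case 0 then show ?case using top by simp
  next
    case (Suc k)
    then have "M - k \<in> S" and "m < M - k" by simp_all
    then have "M - k - 1 \<in> S" by (rule step)
    then show ?case by simp
  qed
  fix s assume "s \<in> {m..M}"
  then have "M - (M - s) \<in> S" by (intro down) auto
  then show "s \<in> S" using \<open>s \<in> {m..M}\<close> by simp
qed

text \<open>Every quad larger than a least one has b \<ge> 1, so its size can be lowered by one.\<close>

lemma Qd_sizes_interval:
  assumes qmin: "qmin \<in> Qd d1 d2" "\<And>q. q \<in> Qd d1 d2 \<Longrightarrow> qsize qmin \<le> qsize q"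
    and qmax: "qmax \<in> Qd d1 d2" "\<And>q. q \<in> Qd d1 d2 \<Longrightarrow> qsize q \<le> qsize qmax"
  shows "qsize ` Qd d1 d2 = {qsize qmin .. qsize qmax}"
proof
  show "qsize ` Qd d1 d2 \<subseteq> {qsize qmin .. qsize qmax}" using qmin qmax by auto
  show "{qsize qmin .. qsize qmax} \<subseteq> qsize ` Qd d1 d2"
  proof (rule interval_by_unit_steps)
    show "qsize qmax \<in> qsize ` Qd d1 d2" using qmax by simp
  next
    fix s assume "s \<in> qsize ` Qd d1 d2" and larger: "qsize qmin < s"
    then obtain i a b c where q: "(i, a, b, c) \<in> Qd d1 d2" and s: "s = qsize (i, a, b, c)"
      by auto
    have "b \<noteq> 0"
    proof
      assume "b = 0"
      then show False using Qd_b0_min_size[of i a c d1 d2 qmin] q qmin larger s by simp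
    qed
    then obtain q' where "q' \<in> Qd d1 d2" "qsize q' + 1 = s"
      using Qd_size_step_down[OF q] s by auto
    then show "s - 1 \<in> qsize ` Qd d1 d2" by force
  qed
qed

section \<open>Integer coordinates of the values\<close>

text \<open>tau^k = (-1)^k (F k - F (k+1) tau): the orbit of (F k, F (k+1)) reaches (1, 0)
  at index k, so this is an instance of the conjugation identity.\<close>

lemma tau_pow_coords: "tau ^ k = (-1) ^ k * (of_int (F k) - of_int (F (Suc k)) * tau)"
proof -
  have "1 = U (F k) (F (Suc k)) k \<and> 0 = V (F k) (F (Suc k)) k"
    by (rule orbit_unique) simp_all
  then show ?thesis using orbit_conjugate[of k "F k" "F (Suc k)"] by simp
qed

text \<open>Expanding the value of a quad in the basis 1, tau gives coordinates
  \<plusminus>(a F i - b F (i+1) + c F (i+2)) and \<plusminus>(-a F (i+1) + b F (i+2) - c F (i+3)); these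
  are alternating versions of the sums defining d1 and d2, and the bound on the
  second improves by one as soon as both of its positive parts are non-zero.\<close>

lemma Qd_value_coords:
  assumes q: "(i, a, b, c) \<in> Qd d1 d2" and b: "b \<ge> 1" and ic: "i \<ge> 1 \<or> c \<ge> 1"
  shows "\<exists>m n :: int. qval (i, a, b, c) = of_int m + of_int n * tau \<and>
           \<bar>m\<bar> \<le> int d1 \<and> \<bar>n\<bar> \<le> int d2 - 1"
proof -
  have a: "a \<ge> 1" and d1: "qd1 (i, a, b, c) = int d1" and d2: "qd2 (i, a, b, c) = int d2"
    using q by (auto simp: Qd_def is_quad_def)
  define s :: int where "s = (-1) ^ i"
  define m where "m = s * (int a * F i - int b * F (Suc i) + int c * F (Suc (Suc i)))"
  define n where "n = s * (- int a * F (Suc i) + int b * F (Suc (Suc i)) - int c * F (Suc (Suc (Suc i))))"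
  have val: "qval (i, a, b, c) = of_int m + of_int n * tau"
    unfolding qval_tau tau_pow_coords[of i] tau_pow_coords[of "Suc i"] tau_pow_coords[of "Suc (Suc i)"]
      m_def n_def s_def by (simp add: algebra_simps)
  have s: "\<bar>s\<bar> = 1" by (simp add: s_def power_abs)
  have F: "F i \<ge> 0" "F (Suc i) \<ge> 0" "F (Suc (Suc i)) \<ge> 1" "F (Suc (Suc (Suc i))) \<ge> 1"
    using F_nonneg F_pos by auto
  have terms_nonneg: "int a * F i \<ge> 0" "int b * F (Suc i) \<ge> 0" "int c * F (Suc (Suc i)) \<ge> 0"
    "int a * F (Suc i) \<ge> 0" "int c * F (Suc (Suc (Suc i))) \<ge> 0"
    using F by simp_all
  have b_term: "int b * F (Suc (Suc i)) \<ge> 1 * 1"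
    using b F by (intro mult_mono) auto
  have ac_term: "int a * F (Suc i) \<ge> 1 * 1 \<or> int c * F (Suc (Suc (Suc i))) \<ge> 1 * 1"
  proof (cases "i \<ge> 1")
    case True
    then show ?thesis using a F_pos[of "Suc i"] by (intro disjI1 mult_mono) auto
  next
    case False
    then show ?thesis using ic F by (intro disjI2 mult_mono) auto
  qed
  have "\<bar>m\<bar> \<le> int d1"
    using d1 terms_nonneg unfolding m_def abs_mult s qd_F by (simp add: abs_le_iff)
  moreover have "\<bar>n\<bar> \<le> int d2 - 1"
    using d2 terms_nonneg b_term ac_term unfolding n_def abs_mult s qd_F by (auto simp: abs_le_iff)
  ultimately show ?thesis using val by blast
qed

text \<open>Every quad other than the largest and a smallest one has b \<ge> 1 (b = 0 would make
  it smallest) and (i, c) \<noteq> (0, 0) (that key belongs to the largest quad).\<close>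

lemma Qd_intermediate_coords:
  assumes q: "q \<in> Qd d1 d2" and not_top: "q \<noteq> top_quad d1 d2"
    and smaller: "q' \<in> Qd d1 d2" "qsize q' < qsize q"
  shows "\<exists>m n :: int. qval q = of_int m + of_int n * tau \<and> \<bar>m\<bar> \<le> int d1 \<and> \<bar>n\<bar> \<le> int d2 - 1"
proof -
  obtain i a b c where qq: "q = (i, a, b, c)" by (cases q) auto
  have "b \<ge> 1"
    using Qd_b0_min_size[of i a c d1 d2 q'] q smaller unfolding qq by (cases b) auto
  moreover have "i \<ge> 1 \<or> c \<ge> 1"
  proof (rule ccontr)
    assume "\<not> (i \<ge> 1 \<or> c \<ge> 1)"
    then have "i = 0" "c = 0" by auto
    then show False using q not_top unfolding qq by (auto simp: Qd_iff top_quad_def)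
  qed
  ultimately show ?thesis using Qd_value_coords q unfolding qq by blast
qed

theorem mainTheorem18:
  fixes d1 d2 :: nat
  assumes "(d1, d2) \<noteq> (0, 0)"
  shows "finite (Qd d1 d2) \<and> Qd d1 d2 \<noteq> {} \<and> inj_on qsize (Qd d1 d2) \<and>
    (\<exists>qmax \<in> Qd d1 d2. \<exists>qmin \<in> Qd d1 d2.
       qsize ` Qd d1 d2 = {qsize qmin .. qsize qmax} \<and>
       (\<forall>q \<in> Qd d1 d2. qval q > 0) \<and>
       (\<forall>q \<in> Qd d1 d2. \<forall>q' \<in> Qd d1 d2. qsize q < qsize q' \<longrightarrow> qval q < qval q') \<and>
       qsize qmax = d1 + d2 \<and>
       qval qmax = real d1 + real d2 * gam powi (-1) \<and>
       qval qmin = \<bar>real d1 - real d2 * gam powi (-1)\<bar> \<and>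
       (\<forall>q \<in> Qd d1 d2 - {qmax, qmin}. \<exists>m n :: int.
          qval q = real_of_int m + real_of_int n * gam powi (-1) \<and>
          \<bar>m\<bar> \<le> int d1 \<and> \<bar>n\<bar> \<le> int d2 - 1))"
proof -
  let ?Q = "Qd d1 d2" and ?top = "top_quad d1 d2"
  note top = top_quad[OF assms]
  obtain qmin where qmin: "qmin \<in> ?Q" and least: "\<And>q. q \<in> ?Q \<Longrightarrow> qsize qmin \<le> qsize q"
    using ex_has_least_nat[of "\<lambda>q. q \<in> ?Q" ?top qsize] top(1) by blast
  have sizes: "qsize ` ?Q = {qsize qmin .. qsize ?top}"
    using Qd_sizes_interval[OF qmin least top(1)] Qd_size_le top(2) by simp
  have "qsize qmin < qsize q" if "q \<in> ?Q - {?top, qmin}" for q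
    using least[of q] Qd_size_inj qmin that by (fastforce simp: inj_on_def)
  then have intermediate: "\<forall>q \<in> ?Q - {?top, qmin}. \<exists>m n :: int.
      qval q = of_int m + of_int n * tau \<and> \<bar>m\<bar> \<le> int d1 \<and> \<bar>n\<bar> \<le> int d2 - 1"
    using Qd_intermediate_coords qmin by blast
  show ?thesis
    unfolding tau_def[symmetric]
    using Qd_finite Qd_size_inj Qd_value_pos Qd_value_mono top sizes intermediate
      Qd_least_size_value[OF qmin least] qmin by blast
qed

end
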